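(* Let $(\mathcal{A},\varphi)$ be a tracial noncommutative probability space with universal enveloping traffic space $(\mathcal{B},\psi)$, and let $t\in\Theta(\mathcal{B})$ be (the class of) a graph monomial such that either $v_{\mathrm{in}}=v_{\mathrm{out}}$ or some simple cycle of its underlying undirected multigraph passes through both $v_{\mathrm{in}}$ and $v_{\mathrm{out}}$. Then $t\equiv\Delta(t)\pmod\psi$.
   Context: $(\mathcal{A},\varphi)$: unital complex algebra with unital tracial linear functional; free cumulants $\kappa_n$ determined by $\varphi(a_1\cdots a_n)=\sum_{\pi\in NC(n)}\prod_{B\in\pi}\kappa_{|B|}[(a_i)_{i\in B}]$. A graph monomial in $\mathcal{A}$ is a finite connected directed multigraph (loops, parallel edges allowed) with distinguished, not necessarily distinct, vertices $v_{\mathrm{in}},v_{\mathrm{out}}$ and edge labels in $\mathcal{A}$, up to isomorphism. $\iota(a)$: two vertices, one edge from $v_{\mathrm{in}}$ to $v_{\mathrm{out}}$ labelled $a$. Substitution $Z_g(t_1,\dots,t_K)$ for a connected bi-rooted multidigraph $g$ with ordered edges $e_1,\dots,e_K$ replaces each $e_i$ by a copy of $t_i$, identifying $\mathrm{src}(e_i)$ with the input and $\mathrm{tgt}(e_i)$ with the output of $t_i$; the product $t_1t_2$ identifies the input of $t_1$ with the output of $t_2$ (output of $t_1$, input of $t_2$ become output, input). $\mathcal{B}=\mathcal{G}(\mathcal{A})$ is the span of graph monomials modulo the span of $Z_g(\iota(a_1),\dots,\iota(a_K))-Z_g(P(\iota(b_1),\dots,\iota(b_n)),\iota(a_2),\dots)$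 (any edge position) for $a_1=P(b_1,\dots,b_n)$, $P$ a noncommutative polynomial. $\Delta(t)$ is the graph monomial obtained from $t$ by identifying $v_{\mathrm{in}}$ and $v_{\mathrm{out}}$ (the merged vertex being both input and output). $\Theta(\mathcal{B})$ is the span of classes of graph monomials with $v_{\mathrm{in}}=v_{\mathrm{out}}$ or with a simple cycle through both $v_{\mathrm{in}}$ and $v_{\mathrm{out}}$. A test graph is a finite connected directed multigraph with labels in $\mathcal{A}$; $T^\pi$ identifies vertices in blocks of a partition $\pi$. Cactus: connected multigraph with each edge in exactly one simple cycle (loops, pairs of parallel edges count); pads = these cycles; oriented cactus: every pad directed. $\tau^0_\varphi[T]=\prod_{C\in\mathrm{Pads}(T)}\kappa_{n_C}[\gamma(e_1),\dots,\gamma(e_{n_C})]$ for oriented cacti (edges listed with $\mathrm{src}(e_i)=\mathrm{tgt}(e_{i+1})$, indices mod $n_C$), else $0$; $\tau_\varphi[T]=\sum_\pi\tau^0_\varphi[T^\pi]$ over partitions of the vertex set. $\psi(t)=\tau_\varphi[\tilde\Delta(t)]$ where $\tilde\Delta(t)$ identifies input and output and forgets roots. $s\equiv t\pmod\psi$ means $\psi((s-t)u)=0$ for all $u\in\mathcal{B}$. *)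

theory Defs
  imports Complex_Main "HOL-Library.Disjoint_Sets"
begin

text \<open>A unital complex algebra is modelled as a type of class ring_1 together with a
 unital ring homomorphism c from the complex numbers into the centre (scalar z acts as c z * a).\<close>

definition complex_algebra_str :: "(complex \<Rightarrow> 'a::ring_1) \<Rightarrow> bool" where
  "complex_algebra_str c \<longleftrightarrow>
     c 1 = 1 \<and> (\<forall>z w. c (z + w) = c z + c w) \<and> (\<forall>z w. c (z * w) = c z * c w)
     \<and> (\<forall>z a. c z * a = a * c z)"

definition tracial_ncps :: "(complex \<Rightarrow> 'a::ring_1) \<Rightarrow> ('a \<Rightarrow> complex) \<Rightarrow> bool" where
  "tracial_ncps c phi \<longleftrightarrow>
     complex_algebra_str c \<and>
     (\<forall>a b. phi (a + b) = phi a + phi b) \<and> (\<forall>z a. phi (c z * a) = z * phi a) \<and>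
     phi 1 = 1 \<and> (\<forall>a b. phi (a * b) = phi (b * a))"

definition NC :: "nat \<Rightarrow> nat set set set" where
  "NC n = {P. partition_on {0..<n} P \<and>
     (\<forall>B1\<in>P. \<forall>B2\<in>P. B1 \<noteq> B2 \<longrightarrow>
        \<not> (\<exists>a b c d. a < b \<and> b < c \<and> c < d \<and> a \<in> B1 \<and> c \<in> B1 \<and> b \<in> B2 \<and> d \<in> B2))}"

text \<open>kappa xs = kappa_n[x_1,...,x_n]; the free cumulants are determined by the
 moment-cumulant formula.\<close>
definition free_cumulants :: "('a::ring_1 \<Rightarrow> complex) \<Rightarrow> ('a list \<Rightarrow> complex) \<Rightarrow> bool" where
  "free_cumulants phi kappa \<longleftrightarrow>
     (\<forall>xs. phi (prod_list xs) =
        (\<Sum>P\<in>NC (length xs). \<Prod>B\<in>P. kappa (map (\<lambda>i. xs ! i) (sorted_list_of_set B))))"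

text \<open>A directed multigraph: vertex set and a list of edges (source, label, target);
 edges are identified by their index in the list.\<close>
datatype ('v, 'a) tgraph = TG (verts: "'v set") (edges: "('v \<times> 'a \<times> 'v) list")

datatype ('v, 'a) gmon = GM (graph: "('v, 'a) tgraph") (vin: 'v) (vout: 'v)

definition esrc :: "'v \<times> 'a \<times> 'v \<Rightarrow> 'v" where "esrc e = fst e"
definition elab :: "'v \<times> 'a \<times> 'v \<Rightarrow> 'a" where "elab e = fst (snd e)"
definition etgt :: "'v \<times> 'a \<times> 'v \<Rightarrow> 'v" where "etgt e = snd (snd e)"

definition adj :: "('v, 'a) tgraph \<Rightarrow> ('v \<times> 'v) set" where
  "adj T = {(esrc e, etgt e) | e. e \<in> set (edges T)} \<union> {(etgt e, esrc e) | e. e \<in> set (edges T)}"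

definition test_graph :: "('v, 'a) tgraph \<Rightarrow> bool" where
  "test_graph T \<longleftrightarrow> finite (verts T) \<and> verts T \<noteq> {} \<and>
     (\<forall>e\<in>set (edges T). esrc e \<in> verts T \<and> etgt e \<in> verts T) \<and>
     (\<forall>x\<in>verts T. \<forall>y\<in>verts T. (x, y) \<in> (adj T)\<^sup>*)"

definition graph_monomial :: "('v, 'a) gmon \<Rightarrow> bool" where
  "graph_monomial M \<longleftrightarrow> test_graph (graph M) \<and> vin M \<in> verts (graph M) \<and> vout M \<in> verts (graph M)"

definition map_tg :: "('v \<Rightarrow> 'w) \<Rightarrow> ('v, 'a) tgraph \<Rightarrow> ('w, 'a) tgraph" where
  "map_tg f T = TG (f ` verts T) (map (\<lambda>(s, a, t). (f s, a, f t)) (edges T))"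

definition tg_union :: "('v, 'a) tgraph \<Rightarrow> ('v, 'a) tgraph \<Rightarrow> ('v, 'a) tgraph" where
  "tg_union T1 T2 = TG (verts T1 \<union> verts T2) (edges T1 @ edges T2)"

text \<open>Simple cycles of the underlying undirected multigraph: distinct edge indices es,
 distinct vertices ws, edge es!i joining ws!i and ws!(i+1 mod n) (either orientation).
 n = 1 is a loop, n = 2 a pair of parallel edges.\<close>
definition simple_cycle :: "('v, 'a) tgraph \<Rightarrow> nat list \<Rightarrow> 'v list \<Rightarrow> bool" where
  "simple_cycle T es ws \<longleftrightarrow> (let n = length es in
     n \<ge> 1 \<and> length ws = n \<and> distinct es \<and> distinct ws \<and>
     (\<forall>i<n. es ! i < length (edges T) \<and>
        (let e = edges T ! (es ! i) in
          (esrc e = ws ! i \<and> etgt e = ws ! ((i + 1) mod n)) \<or>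
          (etgt e = ws ! i \<and> esrc e = ws ! ((i + 1) mod n)))))"

definition pads :: "('v, 'a) tgraph \<Rightarrow> nat set set" where
  "pads T = {set es | es ws. simple_cycle T es ws}"

definition is_cactus :: "('v, 'a) tgraph \<Rightarrow> bool" where
  "is_cactus T \<longleftrightarrow> test_graph T \<and> (\<forall>i<length (edges T). \<exists>!C. C \<in> pads T \<and> i \<in> C)"

definition directed_listing :: "('v, 'a) tgraph \<Rightarrow> nat set \<Rightarrow> nat list \<Rightarrow> bool" where
  "directed_listing T C es \<longleftrightarrow> distinct es \<and> set es = C \<and>
     (\<forall>i<length es. esrc (edges T ! (es ! i)) = etgt (edges T ! (es ! ((i + 1) mod length es))))"

definition oriented_cactus :: "('v, 'a) tgraph \<Rightarrow> bool" where
  "oriented_cactus T \<longleftrightarrow> is_cactus T \<and> (\<forall>C\<in>pads T. \<exists>es. directed_listing T C es)"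

definition tau0 :: "('a list \<Rightarrow> complex) \<Rightarrow> ('v, 'a) tgraph \<Rightarrow> complex" where
  "tau0 kappa T = (if oriented_cactus T then
      (\<Prod>C\<in>pads T. kappa (map (\<lambda>i. elab (edges T ! i)) (SOME es. directed_listing T C es)))
    else 0)"

definition block_of :: "'v set set \<Rightarrow> 'v \<Rightarrow> 'v set" where
  "block_of P x = (THE B. B \<in> P \<and> x \<in> B)"

definition quot_tg :: "('v, 'a) tgraph \<Rightarrow> 'v set set \<Rightarrow> ('v set, 'a) tgraph" where
  "quot_tg T P = map_tg (block_of P) T"

definition tau :: "('a list \<Rightarrow> complex) \<Rightarrow> ('v, 'a) tgraph \<Rightarrow> complex" where
  "tau kappa T = (\<Sum>P\<in>{P. partition_on (verts T) P}. tau0 kappa (quot_tg T P))"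

definition merge_io :: "(nat, 'a) gmon \<Rightarrow> nat \<Rightarrow> nat" where
  "merge_io M v = (if v = vout M then vin M else v)"

definition Delta :: "(nat, 'a) gmon \<Rightarrow> (nat, 'a) gmon" where
  "Delta M = GM (map_tg (merge_io M) (graph M)) (vin M) (vin M)"

definition Delta_tilde :: "(nat, 'a) gmon \<Rightarrow> (nat, 'a) tgraph" where
  "Delta_tilde M = map_tg (merge_io M) (graph M)"

text \<open>Product t1 t2: disjoint union, input of t1 identified with output of t2;
 output of t1 is the output, input of t2 is the input.\<close>
definition gm_mult :: "(nat, 'a) gmon \<Rightarrow> (nat, 'a) gmon \<Rightarrow> (nat, 'a) gmon" where
  "gm_mult M N = (let h = (\<lambda>w. if w = 2 * vin M then 2 * vout N + 1 else w) in
     GM (map_tg h (tg_union (map_tg (\<lambda>v. 2 * v) (graph M)) (map_tg (\<lambda>v. 2 * v + 1) (graph N))))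
        (2 * vin N + 1) (h (2 * vout M)))"

definition psi :: "('a list \<Rightarrow> complex) \<Rightarrow> (nat, 'a) gmon \<Rightarrow> complex" where
  "psi kappa M = tau kappa (Delta_tilde M)"

definition in_Theta :: "('v, 'a) gmon \<Rightarrow> bool" where
  "in_Theta M \<longleftrightarrow> vin M = vout M \<or>
     (\<exists>es ws. simple_cycle (graph M) es ws \<and> vin M \<in> set ws \<and> vout M \<in> set ws)"

end

theory Submission
  imports Defs
begin

text \<open>For a graph monomial \<open>u\<close>, \<open>psi (t u)\<close> and \<open>psi (Delta t u)\<close> are the traces \<open>tau\<close> of two
  graphs which differ only in that two vertices \<open>a\<close>, \<open>b\<close> (coming from the output and the input
  of \<open>u\<close>) are identified in the second one. The partitions of the second graph correspond to
  the partitions of the first one having \<open>a\<close> and \<open>b\<close> in the same block, so it suffices that every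
  quotient separating \<open>a\<close> from \<open>b\<close> fails to be a cactus. It does: the two arcs of the simple
  cycle of \<open>t\<close> through its input and output, together with a walk through \<open>u\<close>, are three
  edge-disjoint walks between the images of \<open>a\<close> and \<open>b\<close>, and in a cactus no two distinct vertices
  are joined by three edge-disjoint walks.\<close>

section \<open>Walks and simple cycles\<close>

definition joins :: "('v, 'a) tgraph \<Rightarrow> nat \<Rightarrow> 'v \<Rightarrow> 'v \<Rightarrow> bool" where
  "joins T k p q \<longleftrightarrow> (esrc (edges T ! k) = p \<and> etgt (edges T ! k) = q) \<or>
                       (etgt (edges T ! k) = p \<and> esrc (edges T ! k) = q)"

definition walk :: "('v, 'a) tgraph \<Rightarrow> 'v list \<Rightarrow> nat list \<Rightarrow> bool" where
  "walk T vs es \<longleftrightarrow> length vs = Suc (length es) \<and>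
     (\<forall>i<length es. es ! i < length (edges T) \<and> joins T (es ! i) (vs ! i) (vs ! Suc i))"

lemma walk_single [simp]: "walk T [v] []"
  by (simp add: walk_def)

lemma walk_Nil_iff: "walk T vs [] \<longleftrightarrow> (\<exists>v. vs = [v])"
  by (auto simp: walk_def length_Suc_conv)

lemma walk_Cons:
  "walk T (v # w # vs) (e # es) \<longleftrightarrow> e < length (edges T) \<and> joins T e v w \<and> walk T (w # vs) es"
  by (auto simp: walk_def All_less_Suc2)

lemma walk_ConsE:
  assumes "walk T vs (e # es)"
  obtains v w vs' where "vs = v # w # vs'" "e < length (edges T)" "joins T e v w" "walk T (w # vs') es"
proof -
  from assms have "length vs = Suc (Suc (length es))" by (simp add: walk_def)
  then obtain v w vs' where "vs = v # w # vs'" by (metis length_Suc_conv)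
  with assms walk_Cons that show ?thesis by metis
qed

lemma walk_nonempty: "walk T vs es \<Longrightarrow> vs \<noteq> []"
  by (auto simp: walk_def)

lemma walk_edges_nonempty: "walk T vs es \<Longrightarrow> hd vs \<noteq> last vs \<Longrightarrow> es \<noteq> []"
  by (auto simp: walk_Nil_iff)

lemma walk_edges_valid: "walk T vs es \<Longrightarrow> set es \<subseteq> {..<length (edges T)}"
  by (auto simp: walk_def in_set_conv_nth)

lemma walk_append:
  "walk T vs es \<Longrightarrow> walk T ws fs \<Longrightarrow> last vs = hd ws \<Longrightarrow> walk T (vs @ tl ws) (es @ fs)"
proof (induction es arbitrary: vs)
  case Nil
  then obtain v where "vs = [v]" by (auto simp: walk_Nil_iff)
  with Nil show ?case using walk_nonempty[OF Nil(2)] by (cases ws) auto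
next
  case (Cons e es)
  from Cons.prems(1) obtain v w vs' where
    vs: "vs = v # w # vs'" "e < length (edges T)" "joins T e v w" "walk T (w # vs') es"
    by (rule walk_ConsE)
  have "walk T ((w # vs') @ tl ws) (es @ fs)"
    using Cons.IH[OF vs(4) Cons.prems(2)] Cons.prems(3) vs(1) by simp
  then show ?case using vs by (simp add: walk_Cons)
qed

lemma walk_drop: "walk T vs es \<Longrightarrow> k \<le> length es \<Longrightarrow> walk T (drop k vs) (drop k es)"
  by (auto simp: walk_def add.commute[of k])

lemma walk_edge_endpoints:
  "walk T vs es \<Longrightarrow> k \<in> set es \<Longrightarrow> esrc (edges T ! k) \<in> set vs \<and> etgt (edges T ! k) \<in> set vs"
proof (induction es arbitrary: vs)
  case (Cons e es)
  from Cons.prems(1) obtain v w vs' where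
    vs: "vs = v # w # vs'" "joins T e v w" "walk T (w # vs') es"
    by (rule walk_ConsE)
  show ?case
  proof (cases "k = e")
    case True
    then show ?thesis using vs by (auto simp: joins_def)
  next
    case False
    then show ?thesis using Cons.IH[OF vs(3)] Cons.prems(2) vs(1) by auto
  qed
qed simp

lemma walk_last_edge:
  assumes "walk T vs es" "es \<noteq> []"
  shows "esrc (edges T ! last es) = last vs \<or> etgt (edges T ! last es) = last vs"
proof -
  define i where "i = length es - 1"
  have i: "i < length es" "Suc i = length es" using assms(2) by (auto simp: i_def)
  have "joins T (es ! i) (vs ! i) (vs ! Suc i)" using assms(1) i(1) by (simp add: walk_def)
  moreover have "last es = es ! i" using assms(2) by (simp add: last_conv_nth i_def)
  moreover have "last vs = vs ! Suc i"
    using assms(1) i walk_nonempty[OF assms(1)] by (simp add: walk_def last_conv_nth)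
  ultimately show ?thesis by (auto simp: joins_def)
qed

lemma walk_from_last_visit:
  "walk T vs es \<Longrightarrow> x \<in> set vs \<Longrightarrow> x \<noteq> last vs \<Longrightarrow>
   \<exists>vs' es'. walk T vs' es' \<and> hd vs' = x \<and> last vs' = last vs \<and> x \<notin> set (tl vs') \<and> set es' \<subseteq> set es"
proof (induction es arbitrary: vs)
  case (Cons e es)
  from Cons.prems(1) obtain v w vs' where
    vs: "vs = v # w # vs'" "walk T (w # vs') es"
    by (rule walk_ConsE)
  show ?case
  proof (cases "x \<in> set (w # vs')")
    case True
    with Cons.IH[OF vs(2)] Cons.prems(3) vs(1) show ?thesis by fastforce
  next
    case False
    with Cons.prems vs show ?thesis by (intro exI[of _ vs] exI[of _ "e # es"]) auto
  qed
qed (auto simp: walk_Nil_iff)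

lemma walk_to_path:
  "walk T vs es \<Longrightarrow>
   \<exists>vs' es'. walk T vs' es' \<and> hd vs' = hd vs \<and> last vs' = last vs \<and> distinct vs' \<and> set es' \<subseteq> set es"
proof (induction es arbitrary: vs)
  case Nil
  then show ?case by (intro exI[of _ vs] exI[of _ "[]"]) (auto simp: walk_Nil_iff)
next
  case (Cons e es)
  from Cons.prems(1) obtain v w vs' where
    vs: "vs = v # w # vs'" "e < length (edges T)" "joins T e v w" "walk T (w # vs') es"
    by (rule walk_ConsE)
  from Cons.IH[OF vs(4)] obtain ps fs where
    ps: "walk T ps fs" "hd ps = w" "last ps = last vs" "distinct ps" "set fs \<subseteq> set es"
    using vs(1) by auto
  show ?case
  proof (cases "v \<in> set ps")
    case False
    obtain ps' where "ps = w # ps'" using walk_nonempty[OF ps(1)] ps(2) by (cases ps) auto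
    then have "walk T (v # ps) (e # fs)" using ps(1) vs(2,3) by (simp add: walk_Cons)
    moreover have "last (v # ps) = last vs" using ps(3) walk_nonempty[OF ps(1)] by simp
    ultimately show ?thesis using False ps(4,5) vs(1) by (intro exI[of _ "v # ps"] exI[of _ "e # fs"]) auto
  next
    case True
    then obtain k where k: "k < length ps" "ps ! k = v" by (metis in_set_conv_nth)
    have "length ps = Suc (length fs)" using ps(1) by (simp add: walk_def)
    then have "walk T (drop k ps) (drop k fs)" using ps(1) k by (intro walk_drop) auto
    moreover have "set (drop k fs) \<subseteq> set (e # es)" using ps(5) set_drop_subset[of k fs] by auto
    ultimately show ?thesis using k ps vs(1) by (intro exI[of _ "drop k ps"] exI[of _ "drop k fs"])
      (auto simp: hd_drop_conv_nth)
  qed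
qed

lemma path_distinct_edges: "walk T vs es \<Longrightarrow> distinct vs \<Longrightarrow> distinct es"
proof (induction es arbitrary: vs)
  case (Cons e es)
  from Cons.prems(1) obtain v w vs' where
    vs: "vs = v # w # vs'" "joins T e v w" "walk T (w # vs') es"
    by (rule walk_ConsE)
  have "e \<notin> set es"
  proof
    assume "e \<in> set es"
    then have "v \<in> set (w # vs')" using walk_edge_endpoints[OF vs(3)] vs(2) by (auto simp: joins_def)
    then show False using Cons.prems(2) vs(1) by simp
  qed
  then show ?case using Cons.IH[OF vs(3)] Cons.prems(2) vs(1) by simp
qed simp

lemma adj_rtrancl_walk:
  assumes "(x, y) \<in> (adj T)\<^sup>*"
  shows "\<exists>vs es. walk T vs es \<and> hd vs = x \<and> last vs = y"
  using assms
proof (induction rule: rtrancl_induct)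
  case base
  show ?case by (intro exI[of _ "[x]"] exI[of _ "[]"]) simp
next
  case (step y z)
  from step.IH obtain vs es where w: "walk T vs es" "hd vs = x" "last vs = y" by blast
  from step.hyps(2) obtain e where
    e: "e \<in> set (edges T)" "(esrc e = y \<and> etgt e = z) \<or> (etgt e = y \<and> esrc e = z)"
    unfolding adj_def by blast
  then obtain k where "k < length (edges T)" "edges T ! k = e" by (metis in_set_conv_nth)
  with e have "walk T [y, z] [k]" by (simp add: walk_Cons joins_def)
  from walk_append[OF w(1) this] w(3) have "walk T (vs @ [z]) (es @ [k])" by simp
  then show ?case using w walk_nonempty[OF w(1)] by (intro exI[of _ "vs @ [z]"] exI[of _ "es @ [k]"]) simp
qed

lemma simple_cycle_iff:
  "simple_cycle T es ws \<longleftrightarrow> length es \<ge> 1 \<and> length ws = length es \<and> distinct es \<and> distinct ws \<and>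
     (\<forall>i<length es. es ! i < length (edges T) \<and> joins T (es ! i) (ws ! i) (ws ! ((i + 1) mod length es)))"
  by (simp add: simple_cycle_def joins_def Let_def)

lemma path_closes_to_simple_cycle:
  assumes e: "e < length (edges T)" "joins T e p q" and pq: "p \<noteq> q"
    and w: "walk T vs fs" "hd vs = q" "last vs = p" "distinct vs" and ne: "e \<notin> set fs"
  shows "simple_cycle T (e # fs) (p # butlast vs)"
proof -
  have len: "length vs = Suc (length fs)" using w(1) by (simp add: walk_def)
  have fsne: "fs \<noteq> []" using walk_edges_nonempty[OF w(1)] w(2,3) pq by simp
  have vsne: "vs \<noteq> []" using len by auto
  have "distinct (butlast vs @ [last vs])" using w(4) vsne by simp
  then have dws: "distinct (p # butlast vs)" using w(3) by auto
  let ?n = "length (e # fs)"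
  have step: "(e # fs) ! i < length (edges T) \<and>
      joins T ((e # fs) ! i) ((p # butlast vs) ! i) ((p # butlast vs) ! ((i + 1) mod ?n))"
    if i: "i < ?n" for i
  proof (cases i)
    case 0
    have "(p # butlast vs) ! 1 = q"
      using fsne len w(2) vsne by (cases vs; cases fs) (auto simp: nth_butlast)
    moreover have "(0 + 1) mod ?n = 1" using fsne by simp
    ultimately show ?thesis using 0 e by simp
  next
    case (Suc j)
    then have j: "j < length fs" using i by simp
    have wj: "fs ! j < length (edges T) \<and> joins T (fs ! j) (vs ! j) (vs ! Suc j)"
      using w(1) j by (simp add: walk_def)
    have a: "(p # butlast vs) ! i = vs ! j" using Suc j len by (simp add: nth_butlast)
    have b: "(p # butlast vs) ! ((i + 1) mod ?n) = vs ! Suc j"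
    proof (cases "Suc j < length fs")
      case True
      then show ?thesis using Suc len by (simp add: nth_butlast)
    next
      case False
      then have "Suc j = length fs" using j by simp
      moreover have "vs ! length fs = p" using w(3) len vsne by (simp add: last_conv_nth)
      ultimately show ?thesis using Suc by simp
    qed
    show ?thesis using wj a b Suc by simp
  qed
  show ?thesis unfolding simple_cycle_iff
    using dws path_distinct_edges[OF w(1,4)] ne len step by (simp del: length_Cons)
qed

lemma inj_on_add_mod: "inj_on (\<lambda>k. (i + k) mod n) {..<(n::nat)}"
proof (rule inj_onI)
  fix k k' assume kk: "k \<in> {..<n}" "k' \<in> {..<n}" "(i + k) mod n = (i + k') mod n"
  then have "int k mod int n = int k' mod int n"
    by (metis add_diff_cancel_left' mod_diff_left_eq of_nat_add of_nat_mod)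
  then show "k = k'" using kk by simp
qed

lemma simple_cycle_arc_walk:
  assumes sc: "simple_cycle T es ws" and "a \<le> b"
  shows "walk T (map (\<lambda>k. ws ! ((i + k) mod length es)) [a..<Suc b])
                (map (\<lambda>k. es ! ((i + k) mod length es)) [a..<b])"
  (is "walk T ?V ?E")
  unfolding walk_def
proof (intro conjI allI impI)
  let ?n = "length es"
  define pos where "pos k = (i + k) mod ?n" for k
  have c: "?n \<ge> 1"
    "\<And>m. m < ?n \<Longrightarrow> es ! m < length (edges T) \<and> joins T (es ! m) (ws ! m) (ws ! ((m + 1) mod ?n))"
    using sc unfolding simple_cycle_iff by auto
  have pos_lt: "pos k < ?n" for k using c(1) unfolding pos_def by (intro mod_less_divisor) linarith
  show "length ?V = Suc (length ?E)" using assms(2) by simp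
  fix r assume "r < length ?E"
  then have r: "a + r < b" by simp
  have "(pos (a + r) + 1) mod ?n = pos (a + Suc r)" by (simp add: pos_def mod_Suc_eq)
  then have "?E ! r = es ! pos (a + r) \<and> ?V ! r = ws ! pos (a + r) \<and>
      ?V ! Suc r = ws ! ((pos (a + r) + 1) mod ?n)"
    using r nth_upt[of a r b] nth_upt[of a r "Suc b"] nth_upt[of a "Suc r" "Suc b"]
    by (simp add: pos_def del: upt_Suc)
  then show "?E ! r < length (edges T)" "joins T (?E ! r) (?V ! r) (?V ! Suc r)"
    using c(2)[OF pos_lt] by simp_all
qed

text \<open>Going around the cycle from the position \<open>i\<close> of \<open>p\<close>: the arc of offsets \<open>[0, L]\<close> runs
  from \<open>p\<close> to \<open>q\<close>, the arc of offsets \<open>[L, n]\<close> back to \<open>p\<close>.\<close>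

lemma simple_cycle_arcs:
  assumes sc: "simple_cycle T es ws" and p: "p \<in> set ws" and q: "q \<in> set ws"
  shows "\<exists>V1 W1 V2 W2. walk T V1 W1 \<and> hd V1 = p \<and> last V1 = q \<and>
            walk T V2 W2 \<and> hd V2 = q \<and> last V2 = p \<and> set W1 \<inter> set W2 = {}"
proof -
  let ?n = "length es"
  have c: "?n \<ge> 1" "length ws = ?n" "distinct es"
    using sc unfolding simple_cycle_iff by auto
  obtain i where i: "i < ?n" "ws ! i = p" using p c(2) by (metis in_set_conv_nth)
  obtain j where j: "j < ?n" "ws ! j = q" using q c(2) by (metis in_set_conv_nth)
  define pos where "pos k = (i + k) mod ?n" for k
  define arcV where "arcV a b = map (\<lambda>k. ws ! pos k) [a..<Suc b]" for a b
  define arcE where "arcE a b = map (\<lambda>k. es ! pos k) [a..<b]" for a b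
  have pos_lt: "pos k < ?n" for k using c(1) unfolding pos_def by (intro mod_less_divisor) linarith
  have arc_walk: "walk T (arcV a b) (arcE a b)" if "a \<le> b" for a b
    unfolding arcV_def arcE_def pos_def using simple_cycle_arc_walk[OF sc that] .
  define L where "L = (j + ?n - i) mod ?n"
  have L: "L < ?n" using c(1) unfolding L_def by (intro mod_less_divisor) linarith
  have posL: "pos L = j"
  proof -
    have "pos L = (i + (j + ?n - i)) mod ?n" unfolding L_def pos_def by (simp add: mod_add_right_eq)
    also have "i + (j + ?n - i) = j + ?n" using i by simp
    finally show ?thesis using j by simp
  qed
  have hd_arcV: "hd (arcV a b) = ws ! pos a" if "a \<le> b" for a b
    using that unfolding arcV_def by (simp add: upt_conv_Cons del: upt_Suc)
  have last_arcV: "last (arcV a b) = ws ! pos b" if "a \<le> b" for a b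
    using that unfolding arcV_def by (simp add: last_map del: upt_Suc)
  have "pos 0 = i" "pos ?n = i" using i by (simp_all add: pos_def)
  then have ends: "hd (arcV 0 L) = p" "last (arcV 0 L) = q" "hd (arcV L ?n) = q" "last (arcV L ?n) = p"
    using hd_arcV last_arcV i j L posL by simp_all
  have "set (arcE 0 L) \<inter> set (arcE L ?n) = {}"
  proof (rule ccontr)
    assume "set (arcE 0 L) \<inter> set (arcE L ?n) \<noteq> {}"
    then obtain k k' where kk: "k < L" "L \<le> k'" "k' < ?n" "es ! pos k = es ! pos k'"
      by (auto simp: arcE_def)
    then have "pos k = pos k'" using c(3) pos_lt by (metis nth_eq_iff_index_eq)
    moreover have "k \<in> {..<?n}" "k' \<in> {..<?n}" using kk L by auto
    ultimately have "k = k'" using inj_on_add_mod[of i ?n] unfolding pos_def inj_on_def by blast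
    then show False using kk by simp
  qed
  then show ?thesis using arc_walk[of 0 L] arc_walk[of L ?n] ends L
    by (intro exI[of _ "arcV 0 L"] exI[of _ "arcE 0 L"] exI[of _ "arcV L ?n"] exI[of _ "arcE L ?n"]) auto
qed

lemma closed_walk_pad:
  assumes e: "e < length (edges T)" "joins T e x w" and xw: "x \<noteq> w"
    and S: "walk T (w # R) S" and W: "walk T V W" "hd V = last (w # R)" "last V = x"
    and ne: "e \<notin> set S" "e \<notin> set W"
  shows "\<exists>F. set (e # F) \<in> pads T \<and> set F \<subseteq> set S \<union> set W \<and> F \<noteq> [] \<and>
             (esrc (edges T ! last F) = x \<or> etgt (edges T ! last F) = x)"
proof -
  have "walk T ((w # R) @ tl V) (S @ W)" using walk_append[OF S W(1)] W(2) by simp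
  from walk_to_path[OF this] obtain P F where
    P: "walk T P F" "hd P = w" "last P = last ((w # R) @ tl V)" "distinct P" "set F \<subseteq> set (S @ W)"
    by auto
  have P_last: "last P = x" using P(3) walk_nonempty[OF W(1)] W by (cases V) auto
  have "simple_cycle T (e # F) (x # butlast P)"
    using path_closes_to_simple_cycle[OF e xw P(1,2) P_last P(4)] P(5) ne by auto
  then have "set (e # F) \<in> pads T" unfolding pads_def by blast
  moreover have "F \<noteq> []" using walk_edges_nonempty[OF P(1)] P(2) P_last xw by simp
  ultimately show ?thesis using walk_last_edge[OF P(1)] P_last P(5) by auto
qed

text \<open>Let \<open>e\<close> be the first edge of the first walk after its last visit of \<open>x\<close>, and \<open>S\<close> the rest
  of it. Closing \<open>S\<close> with the second and with the third walk gives two pads through \<open>e\<close>, which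
  must coincide; the edge of the first pad that returns to \<open>x\<close> then lies in \<open>S\<close>, which avoids \<open>x\<close>.\<close>

lemma cactus_no_three_disjoint_walks:
  assumes cac: "is_cactus T" and xy: "x \<noteq> y"
    and w1: "walk T V1 W1" "hd V1 = x" "last V1 = y"
    and w2: "walk T V2 W2" "hd V2 = y" "last V2 = x"
    and w3: "walk T V3 W3" "hd V3 = y" "last V3 = x"
    and d12: "set W1 \<inter> set W2 = {}" and d13: "set W1 \<inter> set W3 = {}" and d23: "set W2 \<inter> set W3 = {}"
  shows False
proof -
  have "x \<in> set V1" "x \<noteq> last V1" using w1 walk_nonempty[OF w1(1)] xy by auto
  from walk_from_last_visit[OF w1(1) this] w1(3) obtain V W where
    V: "walk T V W" "hd V = x" "last V = y" "x \<notin> set (tl V)" "set W \<subseteq> set W1"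
    by auto
  obtain e S where WS: "W = e # S" using walk_edges_nonempty[OF V(1)] V(2,3) xy by (cases W) auto
  from V(1)[unfolded WS] obtain v w R where
    vs: "V = v # w # R" "e < length (edges T)" "joins T e v w" "walk T (w # R) S"
    by (rule walk_ConsE)
  have xR: "x \<notin> set (w # R)" and xw: "x \<noteq> w" and j: "joins T e x w"
    using V(2,4) vs(1,3) by auto
  have eS: "e \<notin> set S"
    using walk_edge_endpoints[OF vs(4)] j xR by (auto simp: joins_def)
  have eW: "e \<notin> set W2" "e \<notin> set W3" using V(5) WS d12 d13 by auto
  have last_wR: "last (w # R) = y" using V(3) vs(1) by simp
  from closed_walk_pad[OF vs(2) j xw vs(4) w2(1) _ w2(3) eS eW(1)] w2(2) last_wR
  obtain F2 where F2: "set (e # F2) \<in> pads T" "set F2 \<subseteq> set S \<union> set W2" "F2 \<noteq> []"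
     "esrc (edges T ! last F2) = x \<or> etgt (edges T ! last F2) = x" by auto
  from closed_walk_pad[OF vs(2) j xw vs(4) w3(1) _ w3(3) eS eW(2)] w3(2) last_wR
  obtain F3 where F3: "set (e # F3) \<in> pads T" "set F3 \<subseteq> set S \<union> set W3" by auto
  have "\<exists>!C. C \<in> pads T \<and> e \<in> C" using cac vs(2) unfolding is_cactus_def by blast
  then have same_pad: "set (e # F2) = set (e # F3)" using F2(1) F3(1) by auto
  have "last F2 \<in> set F2" using F2(3) by simp
  moreover from this have "last F2 \<noteq> e" using F2(2) eS eW(1) by blast
  ultimately have "last F2 \<in> set S" using same_pad F2(2) F3(2) d23 by auto
  from walk_edge_endpoints[OF vs(4) this] F2(4) xR show False by auto
qed

section \<open>Relabelling the vertices of a test graph\<close>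

definition wf_tgraph :: "('v, 'a) tgraph \<Rightarrow> bool" where
  "wf_tgraph T \<longleftrightarrow> (\<forall>e\<in>set (edges T). esrc e \<in> verts T \<and> etgt e \<in> verts T)"

lemma test_graph_wf: "test_graph T \<Longrightarrow> wf_tgraph T"
  by (simp add: test_graph_def wf_tgraph_def)

lemma wf_tgraph_nth:
  "wf_tgraph T \<Longrightarrow> k < length (edges T) \<Longrightarrow> esrc (edges T ! k) \<in> verts T \<and> etgt (edges T ! k) \<in> verts T"
  by (simp add: wf_tgraph_def)

lemma wf_tgraph_map_tg: "wf_tgraph T \<Longrightarrow> wf_tgraph (map_tg f T)"
  by (auto simp: wf_tgraph_def map_tg_def esrc_def etgt_def)

lemma wf_tgraph_union: "wf_tgraph A \<Longrightarrow> wf_tgraph B \<Longrightarrow> wf_tgraph (tg_union A B)"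
  by (auto simp: wf_tgraph_def tg_union_def)

lemma verts_map_tg: "verts (map_tg f T) = f ` verts T"
  by (simp add: map_tg_def)

lemma length_edges_map_tg [simp]: "length (edges (map_tg f T)) = length (edges T)"
  by (simp add: map_tg_def)

lemma nth_edges_map_tg:
  assumes "k < length (edges T)"
  shows "esrc (edges (map_tg f T) ! k) = f (esrc (edges T ! k))"
    and "etgt (edges (map_tg f T) ! k) = f (etgt (edges T ! k))"
    and "elab (edges (map_tg f T) ! k) = elab (edges T ! k)"
  using assms by (simp_all add: map_tg_def esrc_def etgt_def elab_def split_def)

lemma map_tg_comp: "map_tg g (map_tg f T) = map_tg (g \<circ> f) T"
  by (simp add: map_tg_def image_image split_def)

lemma map_tg_union: "map_tg f (tg_union A B) = tg_union (map_tg f A) (map_tg f B)"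
  by (simp add: map_tg_def tg_union_def image_Un)

lemma map_tg_ident: "map_tg (\<lambda>v. v) T = T"
  by (cases T) (simp add: map_tg_def split_def)

lemma map_tg_cong:
  assumes "wf_tgraph T" "\<And>v. v \<in> verts T \<Longrightarrow> f v = g v"
  shows "map_tg f T = map_tg g T"
proof -
  have "(\<lambda>(s, a, t). (f s, a, f t)) e = (\<lambda>(s, a, t). (g s, a, g t)) e" if "e \<in> set (edges T)" for e
    using assms that by (auto simp: wf_tgraph_def esrc_def etgt_def split_def)
  then show ?thesis using assms(2) by (simp add: map_tg_def cong: image_cong)
qed

lemma map_tg_inv_into:
  assumes "wf_tgraph T" "inj_on g (verts T)"
  shows "map_tg (inv_into (verts T) g) (map_tg g T) = T"
proof -
  have "map_tg (inv_into (verts T) g \<circ> g) T = map_tg (\<lambda>v. v) T"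
    using assms by (intro map_tg_cong) auto
  then show ?thesis by (simp add: map_tg_comp map_tg_ident)
qed

lemma walk_map_tg: "walk T vs es \<Longrightarrow> walk (map_tg f T) (map f vs) es"
  by (auto simp: walk_def joins_def nth_edges_map_tg)

lemma walk_tg_union_left: "walk A vs es \<Longrightarrow> walk (tg_union A B) vs es"
  by (auto simp: walk_def joins_def tg_union_def nth_append)

lemma walk_tg_union_right:
  "walk B vs es \<Longrightarrow> walk (tg_union A B) vs (map ((+) (length (edges A))) es)"
  by (auto simp: walk_def joins_def tg_union_def nth_append)

lemma adj_rtrancl_map_tg:
  assumes "(x, y) \<in> (adj T)\<^sup>*"
  shows "(f x, f y) \<in> (adj (map_tg f T))\<^sup>*"
  using assms
proof (induction rule: rtrancl_induct)
  case (step y z)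
  from step.hyps(2) obtain e where
    e: "e \<in> set (edges T)" "(esrc e = y \<and> etgt e = z) \<or> (etgt e = y \<and> esrc e = z)"
    unfolding adj_def by blast
  have "(f (esrc e), elab e, f (etgt e)) \<in> set (edges (map_tg f T))"
    using e(1) by (force simp: map_tg_def esrc_def etgt_def elab_def split_def)
  then have "(f y, f z) \<in> adj (map_tg f T)"
    using e(2) unfolding adj_def by (auto simp: esrc_def etgt_def)
  with step.IH show ?case by (rule rtrancl_into_rtrancl)
qed simp

lemma test_graph_map_tg:
  assumes "test_graph T"
  shows "test_graph (map_tg f T)"
proof -
  have "(x', y') \<in> (adj (map_tg f T))\<^sup>*" if "x' \<in> f ` verts T" "y' \<in> f ` verts T" for x' y'
    using that assms adj_rtrancl_map_tg by (fastforce simp: test_graph_def)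
  then show ?thesis using assms unfolding test_graph_def verts_map_tg
    by (auto simp: map_tg_def esrc_def etgt_def split_def)
qed

lemma test_graph_map_tg_iff:
  assumes "wf_tgraph T" "inj_on g (verts T)"
  shows "test_graph (map_tg g T) \<longleftrightarrow> test_graph T"
  using test_graph_map_tg[of T g] test_graph_map_tg[of "map_tg g T" "inv_into (verts T) g"]
    map_tg_inv_into[OF assms]
  by auto

lemma simple_cycle_verts:
  assumes "simple_cycle T es ws" "wf_tgraph T"
  shows "set ws \<subseteq> verts T"
proof
  fix v assume "v \<in> set ws"
  then obtain i where i: "i < length ws" "ws ! i = v" by (metis in_set_conv_nth)
  then have "es ! i < length (edges T) \<and> joins T (es ! i) (ws ! i) (ws ! ((i + 1) mod length es))"
    using assms(1) unfolding simple_cycle_iff by auto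
  then show "v \<in> verts T" using wf_tgraph_nth[OF assms(2)] i unfolding joins_def by metis
qed

lemma simple_cycle_map_tg:
  assumes "simple_cycle T es ws" "wf_tgraph T" "inj_on g (verts T)"
  shows "simple_cycle (map_tg g T) es (map g ws)"
proof -
  have inj: "inj_on g (set ws)" using assms(3) simple_cycle_verts[OF assms(1,2)] inj_on_subset by blast
  have c: "length es \<ge> 1" "length ws = length es" "distinct es" "distinct ws"
    "\<And>i. i < length es \<Longrightarrow> es ! i < length (edges T) \<and> joins T (es ! i) (ws ! i) (ws ! ((i + 1) mod length es))"
    using assms(1) unfolding simple_cycle_iff by auto
  show ?thesis unfolding simple_cycle_iff
  proof (intro conjI allI impI)
    fix i assume i: "i < length es"
    have "(i + 1) mod length es < length es" using c(1) by (intro mod_less_divisor) linarith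
    then show "es ! i < length (edges (map_tg g T))"
      "joins (map_tg g T) (es ! i) (map g ws ! i) (map g ws ! ((i + 1) mod length es))"
      using c(5)[OF i] i c(2) by (auto simp: joins_def nth_edges_map_tg)
  qed (use c inj in \<open>auto simp: distinct_map\<close>)
qed

lemma pads_subset_map_tg:
  "wf_tgraph T \<Longrightarrow> inj_on g (verts T) \<Longrightarrow> pads T \<subseteq> pads (map_tg g T)"
  unfolding pads_def using simple_cycle_map_tg by blast

lemma pads_map_tg:
  assumes "wf_tgraph T" "inj_on g (verts T)"
  shows "pads (map_tg g T) = pads T"
proof
  show "pads T \<subseteq> pads (map_tg g T)" by (rule pads_subset_map_tg[OF assms])
  have "pads (map_tg g T) \<subseteq> pads (map_tg (inv_into (verts T) g) (map_tg g T))"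
    using assms by (intro pads_subset_map_tg wf_tgraph_map_tg) (auto simp: verts_map_tg inj_on_inv_into)
  then show "pads (map_tg g T) \<subseteq> pads T" using map_tg_inv_into[OF assms] by simp
qed

lemma pads_edges_valid: "C \<in> pads T \<Longrightarrow> C \<subseteq> {..<length (edges T)}"
  by (auto simp: pads_def simple_cycle_iff in_set_conv_nth)

lemma directed_listing_map_tg_iff:
  assumes "wf_tgraph T" "inj_on g (verts T)" "C \<subseteq> {..<length (edges T)}"
  shows "directed_listing (map_tg g T) C es \<longleftrightarrow> directed_listing T C es"
proof (cases "distinct es \<and> set es = C")
  case True
  then have valid: "es ! i < length (edges T)" if "i < length es" for i
    using assms(3) that nth_mem by blast
  have "esrc (edges (map_tg g T) ! (es ! i)) = etgt (edges (map_tg g T) ! (es ! ((i + 1) mod length es)))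
        \<longleftrightarrow> esrc (edges T ! (es ! i)) = etgt (edges T ! (es ! ((i + 1) mod length es)))"
    if i: "i < length es" for i
  proof -
    have "(i + 1) mod length es < length es" using i by (intro mod_less_divisor) linarith
    from valid[OF this] valid[OF i] show ?thesis
      using wf_tgraph_nth[OF assms(1)] by (simp add: nth_edges_map_tg inj_on_eq_iff[OF assms(2)])
  qed
  then show ?thesis using True by (auto simp: directed_listing_def)
qed (auto simp: directed_listing_def)

lemma tau0_map_tg:
  assumes "wf_tgraph T" "inj_on g (verts T)"
  shows "tau0 kappa (map_tg g T) = tau0 kappa T"
proof -
  have pads: "pads (map_tg g T) = pads T" by (rule pads_map_tg[OF assms])
  have listings: "directed_listing (map_tg g T) C = directed_listing T C" if "C \<in> pads T" for C
    using directed_listing_map_tg_iff[OF assms pads_edges_valid[OF that]] by blast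
  have oriented: "oriented_cactus (map_tg g T) \<longleftrightarrow> oriented_cactus T"
    using pads listings test_graph_map_tg_iff[OF assms] by (simp add: oriented_cactus_def is_cactus_def)
  show ?thesis
  proof (cases "oriented_cactus T")
    case True
    have labels: "map (\<lambda>i. elab (edges (map_tg g T) ! i)) (SOME es. directed_listing T C es) =
          map (\<lambda>i. elab (edges T ! i)) (SOME es. directed_listing T C es)" if "C \<in> pads T" for C
    proof -
      from True that have "directed_listing T C (SOME es. directed_listing T C es)"
        by (auto simp: oriented_cactus_def intro: someI_ex)
      then show ?thesis using pads_edges_valid[OF that] by (auto simp: directed_listing_def nth_edges_map_tg)
    qed
    show ?thesis using True oriented pads listings by (simp add: tau0_def labels cong: prod.cong)
  qed (use oriented in \<open>simp add: tau0_def\<close>)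
qed

section \<open>Identifying two vertices\<close>

lemma block_of_eq:
  assumes "partition_on V P" "B \<in> P" "x \<in> B"
  shows "block_of P x = B"
  unfolding block_of_def
proof (rule the_equality)
  show "B \<in> P \<and> x \<in> B" using assms by simp
  fix B' assume "B' \<in> P \<and> x \<in> B'"
  then show "B' = B" using assms partition_onD2[OF assms(1)] unfolding disjoint_def by blast
qed

lemma block_of_mem:
  assumes "partition_on V P" "x \<in> V"
  shows "block_of P x \<in> P" and "x \<in> block_of P x"
proof -
  obtain B where "B \<in> P" "x \<in> B" using partition_onD1[OF assms(1)] assms(2) by blast
  then show "block_of P x \<in> P" "x \<in> block_of P x" using block_of_eq[OF assms(1)] by simp_all
qed

lemma same_block_mem_iff:
  assumes "partition_on V P" "a \<in> V" "b \<in> V" "block_of P a = block_of P b" "B \<in> P"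
  shows "a \<in> B \<longleftrightarrow> b \<in> B"
proof
  assume "a \<in> B"
  then have "block_of P b = B" using block_of_eq[OF assms(1,5)] assms(4) by simp
  then show "b \<in> B" using block_of_mem(2)[OF assms(1,3)] by simp
next
  assume "b \<in> B"
  then have "block_of P a = B" using block_of_eq[OF assms(1,5)] assms(4) by simp
  then show "a \<in> B" using block_of_mem(2)[OF assms(1,2)] by simp
qed

lemma partition_on_remove_vertex:
  assumes P: "partition_on V P" and ab: "a \<in> V" "b \<in> V" "a \<noteq> b" "block_of P a = block_of P b"
  shows "partition_on (V - {a}) ((\<lambda>B. B - {a}) ` P)" and "inj_on (\<lambda>B. B - {a}) P"
proof -
  have nonempty: "B - {a} \<noteq> {}" if "B \<in> P" for B
  proof
    assume empty: "B - {a} = {}"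
    moreover have "B \<noteq> {}" using partition_onD3[OF P] that by auto
    ultimately have "a \<in> B" by blast
    then have "b \<in> B" using same_block_mem_iff[OF P ab(1,2,4) that] by simp
    with empty ab(3) show False by blast
  qed
  have disj: "B1 \<inter> B2 = {}" if "B1 \<in> P" "B2 \<in> P" "B1 \<noteq> B2" for B1 B2
    using partition_onD2[OF P] that unfolding disjoint_def by blast
  show "partition_on (V - {a}) ((\<lambda>B. B - {a}) ` P)"
  proof (rule partition_onI)
    show "\<Union>((\<lambda>B. B - {a}) ` P) = V - {a}" using partition_onD1[OF P] by auto
    show "{} \<notin> (\<lambda>B. B - {a}) ` P" using nonempty by auto
  next
    fix p q assume "p \<in> (\<lambda>B. B - {a}) ` P" "q \<in> (\<lambda>B. B - {a}) ` P" "p \<noteq> q"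
    then obtain B1 B2 where "B1 \<in> P" "B2 \<in> P" "B1 \<noteq> B2" "p = B1 - {a}" "q = B2 - {a}" by blast
    then show "disjnt p q" using disj by (auto simp: disjnt_def)
  qed
  show "inj_on (\<lambda>B. B - {a}) P"
  proof (rule inj_onI, rule ccontr)
    fix B1 B2 assume "B1 \<in> P" "B2 \<in> P" "B1 - {a} = B2 - {a}" "B1 \<noteq> B2"
    then have "B1 - {a} = {}" using disj by blast
    with nonempty \<open>B1 \<in> P\<close> show False by blast
  qed
qed

lemma partition_on_insert_vertex:
  assumes Q: "partition_on (V - {a}) Q" and ab: "a \<in> V" "b \<in> V" "a \<noteq> b"
  defines "P \<equiv> (\<lambda>B. if b \<in> B then insert a B else B) ` Q"
  shows "partition_on V P" and "block_of P a = block_of P b"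
proof -
  have aQ: "a \<notin> B" if "B \<in> Q" for B using partition_onD1[OF Q] that by auto
  obtain Bb where Bb: "Bb \<in> Q" "b \<in> Bb" using partition_onD1[OF Q] ab by auto
  have disj: "B1 \<inter> B2 = {}" if "B1 \<in> Q" "B2 \<in> Q" "B1 \<noteq> B2" for B1 B2
    using partition_onD2[OF Q] that unfolding disjoint_def by blast
  show part: "partition_on V P"
  proof (rule partition_onI)
    show "\<Union>P = V" using partition_onD1[OF Q] Bb ab unfolding P_def by (auto split: if_splits)
    show "{} \<notin> P" using partition_onD3[OF Q] unfolding P_def by auto
  next
    fix p q assume "p \<in> P" "q \<in> P" "p \<noteq> q"
    then show "disjnt p q" using disj aQ unfolding P_def disjnt_def by (auto split: if_splits)
  qed
  have "insert a Bb \<in> P" using Bb unfolding P_def by force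
  then show "block_of P a = block_of P b" using block_of_eq[OF part] Bb(2) by simp
qed

lemma bij_betw_partitions_remove_vertex:
  assumes ab: "a \<in> V" "b \<in> V" "a \<noteq> b"
  shows "bij_betw (\<lambda>P. (\<lambda>B. B - {a}) ` P)
           {P. partition_on V P \<and> block_of P a = block_of P b} {Q. partition_on (V - {a}) Q}"
proof (intro bij_betw_byWitness[where f' = "\<lambda>Q. (\<lambda>B. if b \<in> B then insert a B else B) ` Q"] ballI subsetI)
  fix P assume "P \<in> {P. partition_on V P \<and> block_of P a = block_of P b}"
  then have P: "partition_on V P" "block_of P a = block_of P b" by simp_all
  have "(if b \<in> B - {a} then insert a (B - {a}) else B - {a}) = B" if "B \<in> P" for B
    using same_block_mem_iff[OF P(1) ab(1,2) P(2) that] ab(3) by auto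
  then have "(\<lambda>B. if b \<in> B then insert a B else B) ` (\<lambda>B. B - {a}) ` P = (\<lambda>B. B) ` P"
    unfolding image_image by (rule image_cong[OF refl])
  then show "(\<lambda>B. if b \<in> B then insert a B else B) ` (\<lambda>B. B - {a}) ` P = P" by simp
next
  fix Q assume "Q \<in> {Q. partition_on (V - {a}) Q}"
  then have "a \<notin> B" if "B \<in> Q" for B using partition_onD1 that by fastforce
  then have "(if b \<in> B then insert a B else B) - {a} = B" if "B \<in> Q" for B using that by auto
  then have "(\<lambda>B. B - {a}) ` (\<lambda>B. if b \<in> B then insert a B else B) ` Q = (\<lambda>B. B) ` Q"
    unfolding image_image by (rule image_cong[OF refl])
  then show "(\<lambda>B. B - {a}) ` (\<lambda>B. if b \<in> B then insert a B else B) ` Q = Q" by simp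
next
  fix Q assume "Q \<in> (\<lambda>P. (\<lambda>B. B - {a}) ` P) ` {P. partition_on V P \<and> block_of P a = block_of P b}"
  then obtain P where "partition_on V P" "block_of P a = block_of P b" "Q = (\<lambda>B. B - {a}) ` P" by blast
  then show "Q \<in> {Q. partition_on (V - {a}) Q}" using partition_on_remove_vertex(1)[OF _ ab] by simp
next
  fix P assume "P \<in> (\<lambda>Q. (\<lambda>B. if b \<in> B then insert a B else B) ` Q) ` {Q. partition_on (V - {a}) Q}"
  then obtain Q where "partition_on (V - {a}) Q" "P = (\<lambda>B. if b \<in> B then insert a B else B) ` Q" by blast
  then show "P \<in> {P. partition_on V P \<and> block_of P a = block_of P b}"
    using partition_on_insert_vertex[OF _ ab] by simp
qed

lemma quot_tg_remove_vertex:
  assumes wf: "wf_tgraph T" and P: "partition_on (verts T) P"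
    and ab: "a \<in> verts T" "b \<in> verts T" "a \<noteq> b" "block_of P a = block_of P b"
  shows "quot_tg (map_tg (\<lambda>v. if v = a then b else v) T) ((\<lambda>B. B - {a}) ` P) =
         map_tg (\<lambda>B. B - {a}) (quot_tg T P)"
proof -
  have "block_of ((\<lambda>B. B - {a}) ` P) (if v = a then b else v) = block_of P v - {a}"
    if v: "v \<in> verts T" for v
  proof (rule block_of_eq[OF partition_on_remove_vertex(1)[OF P ab]])
    show "block_of P v - {a} \<in> (\<lambda>B. B - {a}) ` P" using block_of_mem(1)[OF P v] by simp
    show "(if v = a then b else v) \<in> block_of P v - {a}"
      using block_of_mem[OF P] v ab by auto
  qed
  then have "map_tg (block_of ((\<lambda>B. B - {a}) ` P) \<circ> (\<lambda>v. if v = a then b else v)) T =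
             map_tg ((\<lambda>B. B - {a}) \<circ> block_of P) T"
    by (intro map_tg_cong[OF wf]) simp
  then show ?thesis by (simp add: quot_tg_def map_tg_comp)
qed

text \<open>The partitions in which \<open>a\<close> and \<open>b\<close> share a block correspond to the partitions of the graph
  with \<open>a\<close> merged into \<open>b\<close>.\<close>

lemma tau_merge_vertices:
  assumes wf: "wf_tgraph T" and fin: "finite (verts T)" and ab: "a \<in> verts T" "b \<in> verts T"
    and separated: "\<And>P. partition_on (verts T) P \<Longrightarrow> block_of P a \<noteq> block_of P b \<Longrightarrow>
                        tau0 kappa (quot_tg T P) = 0"
  shows "tau kappa T = tau kappa (map_tg (\<lambda>v. if v = a then b else v) T)"
proof (cases "a = b")
  case True
  then show ?thesis by (simp add: map_tg_ident)
next
  case False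
  define \<sigma> where "\<sigma> = (\<lambda>v. if v = a then b else v)"
  define S where "S = {P. partition_on (verts T) P \<and> block_of P a = block_of P b}"
  have "tau kappa T = (\<Sum>P\<in>S. tau0 kappa (quot_tg T P))"
    unfolding tau_def S_def
    using separated by (intro sum.mono_neutral_right finitely_many_partition_on fin) auto
  also have "\<dots> = (\<Sum>P\<in>S. tau0 kappa (quot_tg (map_tg \<sigma> T) ((\<lambda>B. B - {a}) ` P)))"
  proof (rule sum.cong[OF refl])
    fix P assume "P \<in> S"
    then have P: "partition_on (verts T) P" "block_of P a = block_of P b" by (simp_all add: S_def)
    have "verts (quot_tg T P) \<subseteq> P" using block_of_mem(1)[OF P(1)] by (auto simp: quot_tg_def verts_map_tg)
    then have "inj_on (\<lambda>B. B - {a}) (verts (quot_tg T P))"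
      using partition_on_remove_vertex(2)[OF P(1) ab False P(2)] by (rule inj_on_subset[rotated])
    moreover have "wf_tgraph (quot_tg T P)" unfolding quot_tg_def using wf by (rule wf_tgraph_map_tg)
    ultimately show "tau0 kappa (quot_tg T P) = tau0 kappa (quot_tg (map_tg \<sigma> T) ((\<lambda>B. B - {a}) ` P))"
      unfolding \<sigma>_def quot_tg_remove_vertex[OF wf P(1) ab False P(2)] by (simp add: tau0_map_tg)
  qed
  also have "\<dots> = (\<Sum>Q\<in>{Q. partition_on (verts T - {a}) Q}. tau0 kappa (quot_tg (map_tg \<sigma> T) Q))"
    unfolding S_def by (rule sum.reindex_bij_betw[OF bij_betw_partitions_remove_vertex[OF ab False]])
  also have "\<dots> = tau kappa (map_tg \<sigma> T)"
  proof -
    have "verts (map_tg \<sigma> T) = verts T - {a}" using ab False by (auto simp: verts_map_tg \<sigma>_def)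
    then show ?thesis by (simp add: tau_def)
  qed
  finally show ?thesis unfolding \<sigma>_def .
qed

section \<open>Traces of products of graph monomials\<close>

lemma Delta_eq_self:
  assumes "vin t = vout t"
  shows "Delta t = t"
proof -
  have "merge_io t = (\<lambda>v. v)" using assms by (auto simp: merge_io_def)
  then show ?thesis using assms by (cases t) (simp add: Delta_def map_tg_ident)
qed

text \<open>In \<open>Delta_tilde (gm_mult t u)\<close> the vertices of \<open>u\<close> are renumbered \<open>2 * v + 1\<close>, those of \<open>t\<close>
  are renumbered \<open>2 * v\<close>, except that the input of \<open>t\<close> is glued to the output of \<open>u\<close> and the
  output of \<open>t\<close> to the input of \<open>u\<close>.\<close>

definition glue_left :: "(nat, 'a) gmon \<Rightarrow> (nat, 'a) gmon \<Rightarrow> nat \<Rightarrow> nat" where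
  "glue_left t u v = (if v = vin t then 2 * vout u + 1 else if v = vout t then 2 * vin u + 1 else 2 * v)"

lemma Delta_tilde_gm_mult:
  assumes "vin t \<noteq> vout t"
  shows "Delta_tilde (gm_mult t u) =
    tg_union (map_tg (glue_left t u) (graph t)) (map_tg (\<lambda>v. 2 * v + 1) (graph u))"
proof -
  define h where "h = (\<lambda>w::nat. if w = 2 * vin t then 2 * vout u + 1 else w)"
  define m where "m = (\<lambda>w::nat. if w = 2 * vout t then 2 * vin u + 1 else w)"
  have "graph (gm_mult t u) =
      map_tg h (tg_union (map_tg (\<lambda>v. 2 * v) (graph t)) (map_tg (\<lambda>v. 2 * v + 1) (graph u)))"
    by (simp add: gm_mult_def Let_def h_def)
  moreover have "vin (gm_mult t u) = 2 * vin u + 1" "vout (gm_mult t u) = 2 * vout t"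
    using assms by (simp_all add: gm_mult_def Let_def)
  then have "merge_io (gm_mult t u) = m" by (auto simp: merge_io_def m_def)
  moreover have "m \<circ> (h \<circ> (\<lambda>v. 2 * v)) = glue_left t u"
    using assms by (auto simp: fun_eq_iff m_def h_def glue_left_def Suc_double_not_eq_double)
  moreover have "m \<circ> (h \<circ> (\<lambda>v. 2 * v + 1)) = (\<lambda>v. 2 * v + 1)"
    by (auto simp: fun_eq_iff m_def h_def Suc_double_not_eq_double)
  ultimately show ?thesis unfolding Delta_tilde_def by (simp only: map_tg_union map_tg_comp)
qed

lemma Delta_tilde_gm_mult_Delta:
  assumes "vin t \<noteq> vout t"
  shows "Delta_tilde (gm_mult (Delta t) u) =
    map_tg (\<lambda>v. if v = 2 * vout u + 1 then 2 * vin u + 1 else v) (Delta_tilde (gm_mult t u))"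
proof -
  define h where "h = (\<lambda>w::nat. if w = 2 * vin t then 2 * vout u + 1 else w)"
  define \<sigma> where "\<sigma> = (\<lambda>v::nat. if v = 2 * vout u + 1 then 2 * vin u + 1 else v)"
  have "graph (gm_mult (Delta t) u) = map_tg h (tg_union (map_tg (\<lambda>v. 2 * v) (map_tg (merge_io t) (graph t)))
      (map_tg (\<lambda>v. 2 * v + 1) (graph u)))"
    by (simp add: gm_mult_def Let_def h_def Delta_def)
  moreover have "vin (gm_mult (Delta t) u) = 2 * vin u + 1" "vout (gm_mult (Delta t) u) = 2 * vout u + 1"
    by (simp_all add: gm_mult_def Let_def Delta_def)
  then have "merge_io (gm_mult (Delta t) u) = \<sigma>" by (auto simp: merge_io_def \<sigma>_def)
  moreover have "\<sigma> \<circ> (h \<circ> ((\<lambda>v. 2 * v) \<circ> merge_io t)) = \<sigma> \<circ> glue_left t u"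
    "\<sigma> \<circ> (h \<circ> (\<lambda>v. 2 * v + 1)) = \<sigma> \<circ> (\<lambda>v. 2 * v + 1)"
    using assms by (auto simp: fun_eq_iff \<sigma>_def h_def merge_io_def glue_left_def Suc_double_not_eq_double)
  ultimately show ?thesis
    unfolding Delta_tilde_def[of "gm_mult (Delta t) u"] Delta_tilde_gm_mult[OF assms] \<sigma>_def[symmetric]
    by (simp only: map_tg_union map_tg_comp)
qed

lemma Delta_tilde_gm_mult_wf_verts:
  assumes t: "graph_monomial t" and u: "graph_monomial u" and ne: "vin t \<noteq> vout t"
  shows "wf_tgraph (Delta_tilde (gm_mult t u))" "finite (verts (Delta_tilde (gm_mult t u)))"
    "2 * vout u + 1 \<in> verts (Delta_tilde (gm_mult t u))" "2 * vin u + 1 \<in> verts (Delta_tilde (gm_mult t u))"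
proof -
  have tg: "test_graph (graph t)" "test_graph (graph u)" using t u by (simp_all add: graph_monomial_def)
  note G = Delta_tilde_gm_mult[OF ne, of u]
  show "wf_tgraph (Delta_tilde (gm_mult t u))"
    unfolding G by (intro wf_tgraph_union wf_tgraph_map_tg test_graph_wf tg)
  show "finite (verts (Delta_tilde (gm_mult t u)))"
    using tg unfolding G by (simp add: tg_union_def verts_map_tg test_graph_def)
  have "glue_left t u (vin t) = 2 * vout u + 1" "glue_left t u (vout t) = 2 * vin u + 1"
    using ne by (simp_all add: glue_left_def)
  then show "2 * vout u + 1 \<in> verts (Delta_tilde (gm_mult t u))" "2 * vin u + 1 \<in> verts (Delta_tilde (gm_mult t u))"
    using t unfolding G graph_monomial_def by (force simp: tg_union_def verts_map_tg)+
qed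

text \<open>The two arcs of the cycle of \<open>t\<close> and a walk from the input to the output of \<open>u\<close> are three
  edge-disjoint walks between the glued vertices \<open>2 * vout u + 1\<close> and \<open>2 * vin u + 1\<close>.\<close>

lemma map_tg_Delta_tilde_gm_mult_not_cactus:
  assumes u: "graph_monomial u" and cycle: "simple_cycle (graph t) es ws" "vin t \<in> set ws" "vout t \<in> set ws"
    and ne: "vin t \<noteq> vout t" and separated: "f (2 * vout u + 1) \<noteq> f (2 * vin u + 1)"
  shows "\<not> is_cactus (map_tg f (Delta_tilde (gm_mult t u)))"
proof
  assume cactus: "is_cactus (map_tg f (Delta_tilde (gm_mult t u)))"
  let ?G = "map_tg f (Delta_tilde (gm_mult t u))"
  let ?m = "length (edges (graph t))"
  let ?F = "\<lambda>vs. map f (map (glue_left t u) vs)"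
  let ?H = "\<lambda>vs. map f (map (\<lambda>v. 2 * v + 1) vs)"
  from simple_cycle_arcs[OF cycle] obtain V1 W1 V2 W2 where
    arcs: "walk (graph t) V1 W1" "hd V1 = vin t" "last V1 = vout t"
      "walk (graph t) V2 W2" "hd V2 = vout t" "last V2 = vin t" "set W1 \<inter> set W2 = {}"
    by blast
  have "(vin u, vout u) \<in> (adj (graph u))\<^sup>*" using u by (simp add: graph_monomial_def test_graph_def)
  from adj_rtrancl_walk[OF this] obtain V3 W3 where
    w3: "walk (graph u) V3 W3" "hd V3 = vin u" "last V3 = vout u" by blast
  have walks: "walk ?G (?F V1) W1" "walk ?G (?F V2) W2"
    unfolding Delta_tilde_gm_mult[OF ne] by (intro walk_map_tg walk_tg_union_left arcs(1,4))+
  have walk3: "walk ?G (?H V3) (map ((+) ?m) W3)"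
    using walk_map_tg[OF walk_tg_union_right[OF walk_map_tg[OF w3(1)]], of f "map_tg (glue_left t u) (graph t)"]
    unfolding Delta_tilde_gm_mult[OF ne] by simp
  have ends: "hd (?F V1) = f (2 * vout u + 1)" "last (?F V1) = f (2 * vin u + 1)"
    "hd (?F V2) = f (2 * vin u + 1)" "last (?F V2) = f (2 * vout u + 1)"
    "hd (?H V3) = f (2 * vin u + 1)" "last (?H V3) = f (2 * vout u + 1)"
    using arcs w3 ne walk_nonempty[OF arcs(1)] walk_nonempty[OF arcs(4)] walk_nonempty[OF w3(1)]
    by (simp_all add: hd_map last_map glue_left_def)
  have "set W1 \<inter> set (map ((+) ?m) W3) = {}" "set W2 \<inter> set (map ((+) ?m) W3) = {}"
    using walk_edges_valid[OF arcs(1)] walk_edges_valid[OF arcs(4)] by auto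
  with cactus_no_three_disjoint_walks[OF cactus separated walks(1) ends(1,2) walks(2) ends(3,4) walk3 ends(5,6)]
  show False using arcs(7) by blast
qed

theorem corollary2p10:
  fixes c :: "complex \<Rightarrow> 'a::ring_1" and phi :: "'a \<Rightarrow> complex"
    and kappa :: "'a list \<Rightarrow> complex" and t :: "(nat, 'a) gmon"
  assumes "tracial_ncps c phi"
    and "free_cumulants phi kappa"
    and "graph_monomial t"
    and "in_Theta t"
  shows "\<forall>u :: (nat, 'a) gmon. graph_monomial u \<longrightarrow>
           psi kappa (gm_mult t u) = psi kappa (gm_mult (Delta t) u)"
proof (intro allI impI)
  fix u :: "(nat, 'a) gmon"
  assume u: "graph_monomial u"
  show "psi kappa (gm_mult t u) = psi kappa (gm_mult (Delta t) u)"
  proof (cases "vin t = vout t")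
    case True
    then show ?thesis by (simp add: Delta_eq_self)
  next
    case ne: False
    then obtain es ws where cycle: "simple_cycle (graph t) es ws" "vin t \<in> set ws" "vout t \<in> set ws"
      using assms(4) by (auto simp: in_Theta_def)
    have "tau kappa (Delta_tilde (gm_mult t u)) =
        tau kappa (map_tg (\<lambda>v. if v = 2 * vout u + 1 then 2 * vin u + 1 else v) (Delta_tilde (gm_mult t u)))"
    proof (rule tau_merge_vertices[OF Delta_tilde_gm_mult_wf_verts[OF assms(3) u ne]])
      fix P assume "partition_on (verts (Delta_tilde (gm_mult t u))) P"
        "block_of P (2 * vout u + 1) \<noteq> block_of P (2 * vin u + 1)"
      then have "\<not> is_cactus (quot_tg (Delta_tilde (gm_mult t u)) P)"
        unfolding quot_tg_def by (intro map_tg_Delta_tilde_gm_mult_not_cactus[OF u cycle ne])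
      then show "tau0 kappa (quot_tg (Delta_tilde (gm_mult t u)) P) = 0"
        by (simp add: tau0_def oriented_cactus_def)
    qed
    then show ?thesis by (simp add: psi_def Delta_tilde_gm_mult_Delta[OF ne])
  qed
qed

end
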